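(* For $m\in\mathbb{N}$ let $A_m,B_m\in\mathbb{R}^{m\times m}$ be given by $(A_m)_{ij}=1$ if $|i-j|=1$ and $0$ otherwise, and $(B_m)_{ij}=1$ if $j=i+1$, $(B_m)_{ij}=-1$ if $j=i-1$, and $0$ otherwise. Let $e_1,e_m$ be the first and last standard basis vectors of $\mathbb{R}^m$ and set \[ \tilde A=A_m+e_1e_1^T-e_me_m^T,\quad \tilde B=B_m+e_1e_1^T+e_me_m^T,\quad \hat A=-A_m+e_1e_1^T-e_me_m^T. \] For real $c\ge 0$ let \[ \tilde H_c(m)=\begin{bmatrix}\tilde A+2cI & \tilde B\\ \tilde B^T & \hat A-2cI\end{bmatrix}\in\mathbb{R}^{2m\times 2m}. \] Then for all $m\in\mathbb{N}$ and $c\ge 0$ the eigenvalues of $\tilde H_c(m)$ come in plus/minus pairs (counting multiplicity), and $(-2|c-1|,2|c-1|)\cap\sigma(\tilde H_c(m))=\emptyset$. Moreover, $(-2|c-1|,2|c-1|)$ is the largest interval with this property: for every $\epsilon>0$ there is $m$ such that $(-2|c-1|-\epsilon,2|c-1|+\epsilon)\cap\sigma(\tilde H_c(m))\neq\emptyset$.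
   Context: $\sigma$ denotes the spectrum. *)

theory Defs
  imports "Jordan_Normal_Form.Char_Poly"
begin

text \<open>Matrices are 0-indexed in Jordan_Normal_Form: index i here corresponds to i+1 in the paper.\<close>

definition A_mat :: "nat \<Rightarrow> real mat" where
  "A_mat m = mat m m (\<lambda>(i,j). if i = j + 1 \<or> j = i + 1 then 1 else 0)"

definition B_mat :: "nat \<Rightarrow> real mat" where
  "B_mat m = mat m m (\<lambda>(i,j). if j = i + 1 then 1 else if i = j + 1 then -1 else 0)"

definition E_first :: "nat \<Rightarrow> real mat" where
  "E_first m = mat m m (\<lambda>(i,j). if i = 0 \<and> j = 0 then 1 else 0)"

definition E_last :: "nat \<Rightarrow> real mat" where
  "E_last m = mat m m (\<lambda>(i,j). if i = m - 1 \<and> j = m - 1 then 1 else 0)"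

definition A_tilde :: "nat \<Rightarrow> real mat" where
  "A_tilde m = A_mat m + E_first m - E_last m"

definition B_tilde :: "nat \<Rightarrow> real mat" where
  "B_tilde m = B_mat m + E_first m + E_last m"

definition A_hat :: "nat \<Rightarrow> real mat" where
  "A_hat m = - A_mat m + E_first m - E_last m"

definition H_tilde :: "real \<Rightarrow> nat \<Rightarrow> real mat" where
  "H_tilde c m = four_block_mat
     (A_tilde m + (2 * c) \<cdot>\<^sub>m 1\<^sub>m m) (B_tilde m)
     (transpose_mat (B_tilde m)) (A_hat m - (2 * c) \<cdot>\<^sub>m 1\<^sub>m m)"

text \<open>Spectrum of a real square matrix (its real eigenvalues; H_tilde is symmetric).\<close>
definition spec :: "real mat \<Rightarrow> real set" where
  "spec M = {l. eigenvalue M l}"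

end

theory Submission
  imports Defs
begin

text \<open>In the coordinates \<open>a\<^sub>k = x\<^sub>k + x\<^sub>m\<^sub>+\<^sub>k\<close>, \<open>b\<^sub>k = x\<^sub>k - x\<^sub>m\<^sub>+\<^sub>k\<close> the eigenvalue equation
  \<open>H x = \<lambda> x\<close> becomes \<open>\<lambda> a = 2 (P + c b)\<close>, \<open>\<lambda> b = 2 (Q + c a)\<close>, where \<open>(P, Q)\<close> is
  \<open>(a, b)\<close> shifted by one index (with the boundary terms \<open>a\<^sub>0\<close> and \<open>-b\<^sub>m\<^sub>-\<^sub>1\<close> wrapped around).
  The shift preserves the \<open>\<ell>\<^sup>2\<close> norm, which forces \<open>\<lambda>\<^sup>2 \<ge> 4 (1 - c)\<^sup>2\<close>.
  The gap is sharp: a trigonometric ansatz with angle \<open>\<pi> - \<pi>/(2m)\<close> yields the eigenvalue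
  \<open>2 sqrt (1 + c\<^sup>2 - 2 c cos (\<pi>/(2m)))\<close>, which tends to \<open>2 \<bar>c - 1\<bar>\<close>.
  Finally, the flip \<open>J (u, v) = (- rev v, rev u)\<close> satisfies \<open>J\<^sup>2 = -1\<close> and \<open>J H = - H J\<close>, so \<open>H\<close>
  is similar to \<open>-H\<close> and its characteristic polynomial is even.\<close>

lemma sum_lessThan_add: "(\<Sum>j<m + n::nat. f j) = (\<Sum>j<m. f j) + (\<Sum>j<n. f (m + j) :: 'a :: comm_monoid_add)"
  by (induction n) (auto simp: add.assoc)

lemma sum_if_conj_eq_times: "(\<Sum>j<n::nat. (if P \<and> j = t then w else 0) * g j) = (if P \<and> t < n then w * g t else (0 :: 'a :: semiring_0))"
proof -
  have "(\<Sum>j<n. (if P \<and> j = t then w else 0) * g j) = (\<Sum>j<n. if j = t then (if P then w * g t else 0) else 0)"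
    by (rule sum.cong) auto
  then show ?thesis by simp
qed

lemma mat_eq_by_mult_vec:
  fixes A B :: "'a :: comm_ring_1 mat"
  assumes A: "A \<in> carrier_mat n n" and B: "B \<in> carrier_mat n n"
    and eq: "\<And>x. x \<in> carrier_vec n \<Longrightarrow> A *\<^sub>v x = B *\<^sub>v x"
  shows "A = B"
proof (rule eq_matI)
  fix i j assume i: "i < dim_row B" and j: "j < dim_col B"
  have "A $$ (i, j) = (A *\<^sub>v unit_vec n j) $ i" using A B i j by (simp add: row_def)
  also have "\<dots> = (B *\<^sub>v unit_vec n j) $ i" using eq[of "unit_vec n j"] by simp
  also have "\<dots> = B $$ (i, j)" using A B i j by (simp add: row_def)
  finally show "A $$ (i, j) = B $$ (i, j)" .
qed (use A B in auto)

lemma poly_char_poly_uminus: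
  fixes A :: "'a :: field mat"
  assumes A: "A \<in> carrier_mat n n"
  shows "poly (char_poly (- A)) x = (-1) ^ n * poly (char_poly A) (- x)"
proof -
  have "- char_matrix (- A) x = (-1) \<cdot>\<^sub>m (- char_matrix A (- x))"
    by (rule eq_matI) (use A in \<open>auto simp: char_matrix_def\<close>)
  then show ?thesis
    using A carrier_matD[OF char_matrix_closed[OF A, of "- x"]]
    by (simp add: char_poly_matrix[OF A] char_poly_matrix[of "- A" n])
qed

lemma pcompose_power_left: "pcompose (p ^ n) q = pcompose p q ^ n"
  by (induction n) (simp_all add: pcompose_mult)

lemma order_uminus_eq_of_even:
  fixes p :: "'a :: {ring_char_0, idom} poly"
  assumes p0: "p \<noteq> 0" and even: "\<And>x. poly p (- x) = poly p x"
  shows "order (- a) p = order a p"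
proof -
  have reflect: "pcompose p [:0, -1:] = p"
    by (rule poly_ext) (simp add: poly_pcompose even)
  have "[:b, 1:] ^ n dvd p" if divides: "[:- b, 1:] ^ n dvd p" for b n
  proof -
    obtain q where "p = [:- b, 1:] ^ n * q" using divides by (elim dvdE)
    then have "p = pcompose ([:- b, 1:] ^ n * q) [:0, -1:]" using reflect by simp
    also have "\<dots> = (Polynomial.smult (-1) [:b, 1:]) ^ n * pcompose q [:0, -1:]"
      by (simp add: pcompose_mult pcompose_power_left pcompose_pCons)
    also have "\<dots> = [:b, 1:] ^ n * Polynomial.smult ((-1) ^ n) (pcompose q [:0, -1:])"
      by (simp only: smult_power mult_smult_left mult_smult_right)
    finally show ?thesis by (rule dvdI)
  qed
  from this[of a] this[of "- a"] show ?thesis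
    using p0 order_1 order_divides by (metis antisym minus_minus)
qed

lemmas H_tilde_defs = H_tilde_def A_tilde_def A_hat_def B_tilde_def A_mat_def B_mat_def E_first_def E_last_def

lemma H_tilde_carrier: "H_tilde c m \<in> carrier_mat (2 * m) (2 * m)"
  unfolding H_tilde_defs mult_2
  by (rule four_block_carrier_mat) auto

lemma H_tilde_mult_vec_index:
  assumes x: "x \<in> carrier_vec (2 * m)" and k: "k < 2 * m"
  shows "(H_tilde c m *\<^sub>v x) $ k
    = (\<Sum>j<m. H_tilde c m $$ (k, j) * x $ j) + (\<Sum>j<m. H_tilde c m $$ (k, m + j) * x $ (m + j))"
proof -
  have "(H_tilde c m *\<^sub>v x) $ k = (\<Sum>j<m + m. H_tilde c m $$ (k, j) * x $ j)"
    using x k H_tilde_carrier[of c m] by (simp add: scalar_prod_def lessThan_atLeast0 mult_2)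
  then show ?thesis by (simp add: sum_lessThan_add)
qed

text \<open>The \<open>True \<and>\<close> guards put every indicator into the shape of \<open>sum_if_conj_eq_times\<close>.\<close>

lemma adjacent_indicator_split:
  "(if k = j + 1 \<or> j = k + 1 then 1 else 0) = (if 0 < k \<and> j = k - 1 then 1 else (0::real)) + (if True \<and> j = k + 1 then 1 else 0)"
  for k j :: nat by (auto split: if_split; arith)

lemma successor_indicator_split:
  "(if j = k + 1 then 1 else if k = j + 1 then -1 else (0::real)) = (if True \<and> j = k + 1 then 1 else 0) + (if 0 < k \<and> j = k - 1 then -1 else 0)"
  for k j :: nat by (auto split: if_split; arith)

lemma predecessor_indicator_split:
  "(if k = j + 1 then 1 else if j = k + 1 then -1 else (0::real)) = (if 0 < k \<and> j = k - 1 then 1 else 0) + (if True \<and> j = k + 1 then -1 else 0)"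
  for k j :: nat by (auto split: if_split; arith)

lemma diagonal_indicator: "(if k = j then w else 0) = (if True \<and> j = k then w else (0::real))"
  for k j :: nat by auto

context
  fixes c :: real and m k j :: nat
  assumes k: "k < m" and j: "j < m"
begin

lemma H_tilde_upper_left:
  "H_tilde c m $$ (k, j) = (if k = j + 1 \<or> j = k + 1 then 1 else 0)
     + (if k = 0 \<and> j = 0 then 1 else 0) - (if k = m - 1 \<and> j = m - 1 then 1 else 0) + (if k = j then 2 * c else 0)"
  using k j unfolding H_tilde_defs
  by (simp add: index_mat_four_block)

lemma H_tilde_upper_right:
  "H_tilde c m $$ (k, m + j) = (if j = k + 1 then 1 else if k = j + 1 then -1 else 0)
     + (if k = 0 \<and> j = 0 then 1 else 0) + (if k = m - 1 \<and> j = m - 1 then 1 else 0)"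
  using k j unfolding H_tilde_defs
  by (simp add: index_mat_four_block)

lemma H_tilde_lower_left:
  "H_tilde c m $$ (m + k, j) = (if k = j + 1 then 1 else if j = k + 1 then -1 else 0)
     + (if k = 0 \<and> j = 0 then 1 else 0) + (if k = m - 1 \<and> j = m - 1 then 1 else 0)"
  using k j unfolding H_tilde_defs
  by (simp add: index_mat_four_block)

lemma H_tilde_lower_right:
  "H_tilde c m $$ (m + k, m + j) = - (if k = j + 1 \<or> j = k + 1 then 1 else 0)
     + (if k = 0 \<and> j = 0 then 1 else 0) - (if k = m - 1 \<and> j = m - 1 then 1 else 0) - (if k = j then 2 * c else 0)"
  using k j unfolding H_tilde_defs
  by (simp add: index_mat_four_block)

end

definition sym_coord :: "nat \<Rightarrow> real vec \<Rightarrow> nat \<Rightarrow> real" where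
  "sym_coord m x k = x $ k + x $ (m + k)"

definition antisym_coord :: "nat \<Rightarrow> real vec \<Rightarrow> nat \<Rightarrow> real" where
  "antisym_coord m x k = x $ k - x $ (m + k)"

definition back_shift :: "(nat \<Rightarrow> real) \<Rightarrow> (nat \<Rightarrow> real) \<Rightarrow> nat \<Rightarrow> real" where
  "back_shift a b k = (if k = 0 then a 0 else b (k - 1))"

definition fwd_shift :: "nat \<Rightarrow> (nat \<Rightarrow> real) \<Rightarrow> (nat \<Rightarrow> real) \<Rightarrow> nat \<Rightarrow> real" where
  "fwd_shift m a b k = (if k + 1 < m then a (k + 1) else - b (m - 1))"

lemmas sum_indicator_simps =
  distrib_right left_diff_distrib sum.distrib sum_subtractf sum_negf mult_minus_left sum_if_conj_eq_times

lemma H_tilde_mult_vec_upper: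
  assumes x: "x \<in> carrier_vec (2 * m)" and k: "k < m"
  shows "(H_tilde c m *\<^sub>v x) $ k
    = back_shift (sym_coord m x) (antisym_coord m x) k + fwd_shift m (sym_coord m x) (antisym_coord m x) k + 2 * c * x $ k"
proof -
  have "(H_tilde c m *\<^sub>v x) $ k
    = (\<Sum>j<m. ((if k = j + 1 \<or> j = k + 1 then 1 else 0) + (if k = 0 \<and> j = 0 then 1 else 0)
         - (if k = m - 1 \<and> j = m - 1 then 1 else 0) + (if k = j then 2 * c else 0)) * x $ j)
     + (\<Sum>j<m. ((if j = k + 1 then 1 else if k = j + 1 then -1 else 0) + (if k = 0 \<and> j = 0 then 1 else 0)
         + (if k = m - 1 \<and> j = m - 1 then 1 else 0)) * x $ (m + j))"
    using x k by (simp add: H_tilde_mult_vec_index H_tilde_upper_left H_tilde_upper_right)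
  also have "\<dots> = back_shift (sym_coord m x) (antisym_coord m x) k + fwd_shift m (sym_coord m x) (antisym_coord m x) k + 2 * c * x $ k"
    unfolding adjacent_indicator_split successor_indicator_split unfolding diagonal_indicator sum_indicator_simps
    using k by (cases "m = Suc 0") (auto simp: back_shift_def fwd_shift_def sym_coord_def antisym_coord_def)
  finally show ?thesis .
qed

lemma H_tilde_mult_vec_lower:
  assumes x: "x \<in> carrier_vec (2 * m)" and k: "k < m"
  shows "(H_tilde c m *\<^sub>v x) $ (m + k)
    = back_shift (sym_coord m x) (antisym_coord m x) k - fwd_shift m (sym_coord m x) (antisym_coord m x) k - 2 * c * x $ (m + k)"
proof -
  have "(H_tilde c m *\<^sub>v x) $ (m + k)
    = (\<Sum>j<m. ((if k = j + 1 then 1 else if j = k + 1 then -1 else 0) + (if k = 0 \<and> j = 0 then 1 else 0)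
         + (if k = m - 1 \<and> j = m - 1 then 1 else 0)) * x $ j)
     + (\<Sum>j<m. (- (if k = j + 1 \<or> j = k + 1 then 1 else 0) + (if k = 0 \<and> j = 0 then 1 else 0)
         - (if k = m - 1 \<and> j = m - 1 then 1 else 0) - (if k = j then 2 * c else 0)) * x $ (m + j))"
    using x k by (simp add: H_tilde_mult_vec_index H_tilde_lower_left H_tilde_lower_right)
  also have "\<dots> = back_shift (sym_coord m x) (antisym_coord m x) k - fwd_shift m (sym_coord m x) (antisym_coord m x) k - 2 * c * x $ (m + k)"
    unfolding adjacent_indicator_split predecessor_indicator_split unfolding diagonal_indicator sum_indicator_simps
    using k by (cases "m = Suc 0") (auto simp: back_shift_def fwd_shift_def sym_coord_def antisym_coord_def)
  finally show ?thesis .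
qed

lemma H_tilde_eigen_iff:
  assumes x: "x \<in> carrier_vec (2 * m)"
  shows "H_tilde c m *\<^sub>v x = l \<cdot>\<^sub>v x \<longleftrightarrow>
    (\<forall>k<m. l * sym_coord m x k = 2 * (back_shift (sym_coord m x) (antisym_coord m x) k + c * antisym_coord m x k)
         \<and> l * antisym_coord m x k = 2 * (fwd_shift m (sym_coord m x) (antisym_coord m x) k + c * sym_coord m x k))"
    (is "_ \<longleftrightarrow> (\<forall>k<m. ?sym k \<and> ?antisym k)")
proof
  assume ev: "H_tilde c m *\<^sub>v x = l \<cdot>\<^sub>v x"
  show "\<forall>k<m. ?sym k \<and> ?antisym k"
  proof (intro allI impI)
    fix k assume k: "k < m"
    have "(H_tilde c m *\<^sub>v x) $ k = l * x $ k" "(H_tilde c m *\<^sub>v x) $ (m + k) = l * x $ (m + k)"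
      unfolding ev using x k by auto
    then show "?sym k \<and> ?antisym k"
      using H_tilde_mult_vec_upper[OF x k, of c] H_tilde_mult_vec_lower[OF x k, of c]
      by (simp add: sym_coord_def antisym_coord_def algebra_simps)
  qed
next
  assume eqs: "\<forall>k<m. ?sym k \<and> ?antisym k"
  show "H_tilde c m *\<^sub>v x = l \<cdot>\<^sub>v x"
  proof (rule eq_vecI)
    fix i assume "i < dim_vec (l \<cdot>\<^sub>v x)"
    then have i: "i < 2 * m" using x by simp
    show "(H_tilde c m *\<^sub>v x) $ i = (l \<cdot>\<^sub>v x) $ i"
    proof (cases "i < m")
      case True
      then show ?thesis
        using eqs H_tilde_mult_vec_upper[OF x True, of c] x
        by (auto simp: sym_coord_def antisym_coord_def algebra_simps)
    next
      case False
      then obtain k where k: "k < m" and ik: "i = m + k" using i by (metis add_diff_inverse_nat add_less_imp_less_left mult_2)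
      then show ?thesis
        using eqs H_tilde_mult_vec_lower[OF x k, of c] x
        by (auto simp: sym_coord_def antisym_coord_def algebra_simps)
    qed
  qed (use x H_tilde_carrier[of c m] in auto)
qed

lemma sum_squares_shifts:
  assumes "m > 0"
  shows "(\<Sum>k<m. back_shift a b k ^ 2 + fwd_shift m a b k ^ 2) = (\<Sum>k<m. a k ^ 2 + b k ^ 2)"
proof -
  obtain n where m: "m = Suc n" using assms gr0_implies_Suc by blast
  have "(\<Sum>k<m. back_shift a b k ^ 2) = a 0 ^ 2 + (\<Sum>k<n. b k ^ 2)"
    unfolding m sum.lessThan_Suc_shift back_shift_def by simp
  moreover have "(\<Sum>k<m. fwd_shift m a b k ^ 2) = (\<Sum>k<n. a (Suc k) ^ 2) + b n ^ 2"
    unfolding m sum.lessThan_Suc fwd_shift_def by simp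
  moreover have "(\<Sum>k<m. a k ^ 2) = a 0 ^ 2 + (\<Sum>k<n. a (Suc k) ^ 2)"
    unfolding m by (rule sum.lessThan_Suc_shift)
  moreover have "(\<Sum>k<m. b k ^ 2) = (\<Sum>k<n. b k ^ 2) + b n ^ 2"
    unfolding m by simp
  ultimately show ?thesis by (simp add: sum.distrib)
qed

lemma power2_add_mult_ge:
  fixes c p q :: real
  assumes "c \<ge> 0"
  shows "p ^ 2 + c ^ 2 * q ^ 2 - c * (p ^ 2 + q ^ 2) \<le> (p + c * q) ^ 2"
proof -
  have "(p + c * q) ^ 2 - (p ^ 2 + c ^ 2 * q ^ 2 - c * (p ^ 2 + q ^ 2)) = c * (p + q) ^ 2"
    by (simp add: power2_eq_square algebra_simps)
  then show ?thesis using assms by (smt (verit) zero_le_mult_iff zero_le_power2)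
qed

text \<open>Summing \<open>power2_add_mult_ge\<close> over both equations gives \<open>l\<^sup>2 N \<ge> 4 (1 - c)\<^sup>2 N\<close>
  for \<open>N = \<Sum>k. a k\<^sup>2 + b k\<^sup>2\<close>, because the shifts \<open>P, Q\<close> carry the same total mass as \<open>a, b\<close>.\<close>

lemma coupled_system_gap:
  fixes a b P Q :: "nat \<Rightarrow> real"
  assumes c: "c \<ge> 0"
    and eqs: "\<And>k. k < m \<Longrightarrow> l * a k = 2 * (P k + c * b k) \<and> l * b k = 2 * (Q k + c * a k)"
    and mass: "(\<Sum>k<m. P k ^ 2 + Q k ^ 2) = (\<Sum>k<m. a k ^ 2 + b k ^ 2)"
    and nonzero: "k0 < m" "a k0 \<noteq> 0 \<or> b k0 \<noteq> 0"
  shows "2 * \<bar>c - 1\<bar> \<le> \<bar>l\<bar>"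
proof -
  define N where "N = (\<Sum>k<m. a k ^ 2 + b k ^ 2)"
  have "0 < a k0 ^ 2 + b k0 ^ 2" using nonzero by (simp add: sum_power2_gt_zero_iff)
  also have "\<dots> \<le> N" unfolding N_def by (rule member_le_sum) (use nonzero in auto)
  finally have N_pos: "0 < N" .
  have "4 * (1 - c) ^ 2 * N = 4 * (\<Sum>k<m. (P k ^ 2 + Q k ^ 2) + c ^ 2 * (a k ^ 2 + b k ^ 2)
      - c * ((P k ^ 2 + Q k ^ 2) + (a k ^ 2 + b k ^ 2)))"
    using mass unfolding N_def sum.distrib sum_subtractf sum_distrib_left[symmetric]
    by (simp add: power2_eq_square algebra_simps)
  also have "\<dots> \<le> 4 * (\<Sum>k<m. (P k + c * b k) ^ 2 + (Q k + c * a k) ^ 2)"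
  proof -
    have "(P k ^ 2 + Q k ^ 2) + c ^ 2 * (a k ^ 2 + b k ^ 2) - c * ((P k ^ 2 + Q k ^ 2) + (a k ^ 2 + b k ^ 2))
        \<le> (P k + c * b k) ^ 2 + (Q k + c * a k) ^ 2" for k
      using power2_add_mult_ge[OF c, of "P k" "b k"] power2_add_mult_ge[OF c, of "Q k" "a k"]
      unfolding distrib_left by linarith
    then show ?thesis by (simp add: sum_mono)
  qed
  also have "\<dots> = (\<Sum>k<m. (l * a k) ^ 2 + (l * b k) ^ 2)"
    unfolding sum_distrib_left by (rule sum.cong) (auto simp: eqs power2_eq_square algebra_simps)
  also have "\<dots> = l ^ 2 * N"
    unfolding N_def sum_distrib_left by (simp add: power_mult_distrib algebra_simps)
  finally have "(2 * \<bar>c - 1\<bar>) ^ 2 \<le> \<bar>l\<bar> ^ 2"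
    using N_pos by (simp add: power_mult_distrib power2_abs power2_commute)
  then show ?thesis by (rule power2_le_imp_le) simp
qed

lemma H_tilde_spectral_gap:
  assumes c: "c \<ge> 0" and l: "l \<in> spec (H_tilde c m)"
  shows "2 * \<bar>c - 1\<bar> \<le> \<bar>l\<bar>"
proof -
  from l obtain x where x: "x \<in> carrier_vec (2 * m)" "x \<noteq> 0\<^sub>v (2 * m)" "H_tilde c m *\<^sub>v x = l \<cdot>\<^sub>v x"
    using carrier_matD[OF H_tilde_carrier[of c m]] unfolding spec_def eigenvalue_def eigenvector_def by auto
  obtain i where i: "i < 2 * m" "x $ i \<noteq> 0"
    using x(1,2) by (metis carrier_vecD eq_vecI index_zero_vec)
  obtain k where k: "k < m" "sym_coord m x k \<noteq> 0 \<or> antisym_coord m x k \<noteq> 0"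
  proof (cases "i < m")
    case True
    then show ?thesis using that[of i] i by (force simp: sym_coord_def antisym_coord_def)
  next
    case False
    then show ?thesis using that[of "i - m"] i by (force simp: sym_coord_def antisym_coord_def)
  qed
  show ?thesis
  proof (rule coupled_system_gap[OF c _ sum_squares_shifts[of m "sym_coord m x" "antisym_coord m x"] k])
    show "0 < m" using k by simp
    show "l * sym_coord m x j = 2 * (back_shift (sym_coord m x) (antisym_coord m x) j + c * antisym_coord m x j)
        \<and> l * antisym_coord m x j = 2 * (fwd_shift m (sym_coord m x) (antisym_coord m x) j + c * sym_coord m x j)"
      if "j < m" for j
      using H_tilde_eigen_iff[OF x(1)] x(3) that by blast
  qed
qed

lemma H_tilde_eigenvalue_of_coupled_system:
  fixes \<alpha> \<beta> :: "nat \<Rightarrow> real"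
  assumes eqs: "\<And>k. k < m \<Longrightarrow> \<mu> * \<alpha> k = back_shift \<alpha> \<beta> k + c * \<beta> k \<and> \<mu> * \<beta> k = fwd_shift m \<alpha> \<beta> k + c * \<alpha> k"
    and nonzero: "k0 < m" "\<alpha> k0 \<noteq> 0 \<or> \<beta> k0 \<noteq> 0"
  shows "eigenvalue (H_tilde c m) (2 * \<mu>)"
proof -
  define x where "x = vec (2 * m) (\<lambda>i. if i < m then \<alpha> i + \<beta> i else \<alpha> (i - m) - \<beta> (i - m))"
  have x: "x \<in> carrier_vec (2 * m)" unfolding x_def by simp
  have sym: "sym_coord m x k = 2 * \<alpha> k" and antisym: "antisym_coord m x k = 2 * \<beta> k" if "k < m" for k
    using that unfolding x_def sym_coord_def antisym_coord_def by auto
  have shifts: "back_shift (sym_coord m x) (antisym_coord m x) k = 2 * back_shift \<alpha> \<beta> k"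
       "fwd_shift m (sym_coord m x) (antisym_coord m x) k = 2 * fwd_shift m \<alpha> \<beta> k" if "k < m" for k
    using that sym antisym unfolding back_shift_def fwd_shift_def by auto
  have "H_tilde c m *\<^sub>v x = (2 * \<mu>) \<cdot>\<^sub>v x"
    unfolding H_tilde_eigen_iff[OF x]
  proof (intro allI impI)
    fix k assume k: "k < m"
    from eqs[OF k] show "2 * \<mu> * sym_coord m x k = 2 * (back_shift (sym_coord m x) (antisym_coord m x) k + c * antisym_coord m x k)
        \<and> 2 * \<mu> * antisym_coord m x k = 2 * (fwd_shift m (sym_coord m x) (antisym_coord m x) k + c * sym_coord m x k)"
      unfolding shifts[OF k] sym[OF k] antisym[OF k] by (elim conjE) (simp add: algebra_simps)
  qed
  moreover have "x \<noteq> 0\<^sub>v (2 * m)"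
  proof -
    have "x $ k0 \<noteq> 0 \<or> x $ (m + k0) \<noteq> 0"
      using nonzero sym[OF nonzero(1)] antisym[OF nonzero(1)] unfolding sym_coord_def antisym_coord_def by auto
    then show ?thesis using nonzero(1) by auto
  qed
  ultimately show ?thesis
    using x carrier_matD[OF H_tilde_carrier[of c m]] unfolding eigenvalue_def eigenvector_def by auto
qed

lemma harmonic_three_term_recurrence:
  fixes p q t \<phi> :: real
  shows "(p * cos (t - \<phi>) + q * sin (t - \<phi>)) + (p * cos (t + \<phi>) + q * sin (t + \<phi>))
    = 2 * cos \<phi> * (p * cos t + q * sin t)"
  by (simp add: cos_diff sin_diff cos_add sin_add algebra_simps)

text \<open>The eigenvector is found from the ansatz \<open>B j = p cos (j\<phi>) + q sin (j\<phi>)\<close>, which solves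
  the bulk recurrence whenever \<open>\<mu>\<^sup>2 = 1 + c\<^sup>2 + 2 c cos \<phi>\<close>; the first row fixes \<open>(p, q)\<close> up
  to scale, and the last row holds because \<open>cos (m\<phi>) = 0\<close> for \<open>\<phi> = \<pi> - \<pi>/(2m)\<close>.\<close>

lemma H_tilde_eigenvalue_near_gap_edge:
  assumes c: "c > 0" and m: "m > 0"
  shows "eigenvalue (H_tilde c m) (2 * sqrt (1 + c ^ 2 - 2 * c * cos (pi / (2 * real m))))"
proof -
  define t where "t = pi / (2 * real m)"
  define \<phi> where "\<phi> = pi - t"
  define \<mu> where "\<mu> = sqrt (1 + c ^ 2 + 2 * c * cos \<phi>)"
  have t: "0 < t" "t < pi" using m unfolding t_def by (auto simp: field_simps)
  have sin_pos: "sin \<phi> > 0" unfolding \<phi>_def using sin_gt_zero[OF t] by simp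
  have cos_m: "cos (\<phi> * real m) = 0"
  proof -
    have "\<phi> * real m = real m * pi - pi / 2" unfolding \<phi>_def t_def using m by (simp add: field_simps)
    then show ?thesis by (simp add: cos_diff)
  qed
  have "1 + c ^ 2 + 2 * c * cos \<phi> = (c + cos \<phi>) ^ 2 + (sin \<phi>) ^ 2"
    by (simp add: power2_eq_square algebra_simps)
  then have radicand_pos: "1 + c ^ 2 + 2 * c * cos \<phi> > 0" using sin_pos by (simp add: add_nonneg_pos)
  then have mu2: "\<mu> ^ 2 = 1 + c ^ 2 + 2 * c * cos \<phi>" and mu_pos: "\<mu> > 0" unfolding \<mu>_def by simp_all
  define p where "p = c * sin \<phi>"
  define q where "q = \<mu> - 1 - c * cos \<phi>"
  define B where "B = (\<lambda>j::nat. p * cos (\<phi> * real j) + q * sin (\<phi> * real j))"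
  define \<alpha> where "\<alpha> = (\<lambda>k. B k + c * B (k + 1))"
  define \<beta> where "\<beta> = (\<lambda>k. \<mu> * B (k + 1))"
  have rec: "B k + B (k + 2) = 2 * cos \<phi> * B (k + 1)" for k
    using harmonic_three_term_recurrence[of p "\<phi> * real (k + 1)" \<phi> q]
    unfolding B_def by (simp add: algebra_simps)
  have B0: "B 0 = p" and B1: "B (Suc 0) = (\<mu> - 1) * sin \<phi>"
    unfolding B_def p_def q_def by (simp_all add: algebra_simps)
  obtain n where mn: "m = Suc n" using m gr0_implies_Suc by blast
  define s where "s = sin (\<phi> * real m)"
  have Bm: "B (n + 1) = q * s" unfolding B_def s_def using cos_m mn by simp
  have Bn: "B n = s * (p * sin \<phi> + q * cos \<phi>)"
  proof -
    have n: "\<phi> * real n = \<phi> * real m - \<phi>" unfolding mn by (simp add: algebra_simps)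
    show ?thesis unfolding B_def n cos_diff sin_diff cos_m s_def by (simp add: algebra_simps)
  qed
  have first_rows: "\<mu> * \<alpha> k = back_shift \<alpha> \<beta> k + c * \<beta> k" for k
    unfolding back_shift_def \<alpha>_def \<beta>_def by (simp add: B0 B1 p_def algebra_simps)
  have second_rows: "\<mu> * \<beta> k = fwd_shift m \<alpha> \<beta> k + c * \<alpha> k" if k: "k < m" for k
  proof (cases "k + 1 < m")
    case True
    have "\<alpha> (k + 1) + c * \<alpha> k = B (k + 1) + c * (B k + B (k + 2)) + c ^ 2 * B (k + 1)"
      unfolding \<alpha>_def by (simp add: algebra_simps power2_eq_square)
    also have "\<dots> = \<mu> ^ 2 * B (k + 1)" unfolding rec mu2 by (simp add: algebra_simps)
    finally show ?thesis using True unfolding \<beta>_def fwd_shift_def by (simp add: power2_eq_square)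
  next
    case False
    then have kn: "k = n" using k mn by simp
    have sin_sq: "sin \<phi> * sin \<phi> = 1 - cos \<phi> * cos \<phi>" using sin_cos_squared_add[of \<phi>] by (simp add: power2_eq_square)
    have "- \<beta> n + c * \<alpha> n - \<mu> * \<beta> n = - s * (q + 1) * (\<mu> ^ 2 - 1 - c ^ 2 - 2 * c * cos \<phi>)"
      unfolding \<alpha>_def \<beta>_def Bm Bn unfolding p_def q_def by (simp add: sin_sq algebra_simps power2_eq_square)
    also have "\<dots> = 0" using mu2 by simp
    finally show ?thesis using False kn mn unfolding fwd_shift_def by simp
  qed
  have "\<alpha> 0 = c * \<mu> * sin \<phi>" unfolding \<alpha>_def by (simp add: B0 B1 p_def algebra_simps)
  then have "\<alpha> 0 \<noteq> 0" using c mu_pos sin_pos by simp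
  then have "eigenvalue (H_tilde c m) (2 * \<mu>)"
    using H_tilde_eigenvalue_of_coupled_system[of m \<mu> \<alpha> \<beta> c 0] first_rows second_rows m by blast
  moreover have "cos \<phi> = - cos (pi / (2 * real m))" unfolding \<phi>_def t_def by simp
  ultimately show ?thesis unfolding \<mu>_def by simp
qed

definition flip_mat :: "nat \<Rightarrow> real mat" where
  "flip_mat m = mat (2 * m) (2 * m) (\<lambda>(i, j). if j = 2 * m - 1 - i then (if i < m then -1 else 1) else 0)"

lemma flip_mat_carrier: "flip_mat m \<in> carrier_mat (2 * m) (2 * m)"
  unfolding flip_mat_def by simp

lemma flip_mat_mult_vec_upper:
  assumes x: "x \<in> carrier_vec (2 * m)" and j: "j < m"
  shows "(flip_mat m *\<^sub>v x) $ j = - x $ (m + (m - 1 - j))"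
proof -
  have "(flip_mat m *\<^sub>v x) $ j = (\<Sum>i<2 * m. (if True \<and> i = 2 * m - 1 - j then - 1 else 0) * x $ i)"
    using j x by (simp add: flip_mat_def scalar_prod_def lessThan_atLeast0)
  also have "\<dots> = - x $ (2 * m - 1 - j)" unfolding sum_if_conj_eq_times using j by simp
  also have "2 * m - 1 - j = m + (m - 1 - j)" using j by simp
  finally show ?thesis .
qed

lemma flip_mat_mult_vec_lower:
  assumes x: "x \<in> carrier_vec (2 * m)" and j: "j < m"
  shows "(flip_mat m *\<^sub>v x) $ (m + j) = x $ (m - 1 - j)"
proof -
  have "(flip_mat m *\<^sub>v x) $ (m + j) = (\<Sum>i<2 * m. (if True \<and> i = 2 * m - 1 - (m + j) then 1 else 0) * x $ i)"
    using j x by (simp add: flip_mat_def scalar_prod_def lessThan_atLeast0)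
  also have "\<dots> = x $ (m - 1 - j)" unfolding sum_if_conj_eq_times using j by simp
  finally show ?thesis .
qed

lemma flip_mat_mult_vec_twice:
  assumes x: "x \<in> carrier_vec (2 * m)"
  shows "flip_mat m *\<^sub>v (flip_mat m *\<^sub>v x) = - x"
proof (rule eq_vecI)
  have y: "flip_mat m *\<^sub>v x \<in> carrier_vec (2 * m)" using mult_mat_vec_carrier[OF flip_mat_carrier x] .
  fix i assume "i < dim_vec (- x)"
  then have i: "i < 2 * m" using x by simp
  show "(flip_mat m *\<^sub>v (flip_mat m *\<^sub>v x)) $ i = (- x) $ i"
  proof (cases "i < m")
    case True
    then have "m - 1 - i < m" by arith
    with flip_mat_mult_vec_upper[OF y True] flip_mat_mult_vec_lower[OF x this] show ?thesis
      using True x i by simp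
  next
    case False
    then obtain k where k: "k < m" and ik: "i = m + k" using i by (metis add_diff_inverse_nat add_less_imp_less_left mult_2)
    then have "m - 1 - k < m" by arith
    with flip_mat_mult_vec_lower[OF y k] flip_mat_mult_vec_upper[OF x this] show ?thesis
      using k ik x by simp
  qed
qed (use x flip_mat_carrier[of m] in auto)

lemma H_tilde_flip_anticommute_vec:
  assumes x: "x \<in> carrier_vec (2 * m)"
  shows "H_tilde c m *\<^sub>v (flip_mat m *\<^sub>v x) = - (flip_mat m *\<^sub>v (H_tilde c m *\<^sub>v x))"
proof -
  define y where "y = flip_mat m *\<^sub>v x"
  define z where "z = H_tilde c m *\<^sub>v x"
  have y: "y \<in> carrier_vec (2 * m)" unfolding y_def using mult_mat_vec_carrier[OF flip_mat_carrier x] .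
  have z: "z \<in> carrier_vec (2 * m)" unfolding z_def using mult_mat_vec_carrier[OF H_tilde_carrier x] .
  have y_upper: "y $ j = - x $ (m + (m - 1 - j))" if "j < m" for j unfolding y_def using flip_mat_mult_vec_upper[OF x that] .
  have y_lower: "y $ (m + j) = x $ (m - 1 - j)" if "j < m" for j unfolding y_def using flip_mat_mult_vec_lower[OF x that] .
  note coords = back_shift_def fwd_shift_def sym_coord_def antisym_coord_def
  have "H_tilde c m *\<^sub>v y = - (flip_mat m *\<^sub>v z)"
  proof (rule eq_vecI)
    fix i assume "i < dim_vec (- (flip_mat m *\<^sub>v z))"
    then have i: "i < 2 * m" using flip_mat_carrier[of m] by simp
    show "(H_tilde c m *\<^sub>v y) $ i = (- (flip_mat m *\<^sub>v z)) $ i"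
    proof (cases "i < m")
      case True
      obtain r where r: "m = i + 1 + r" using True by (metis add.commute less_imp_Suc_add plus_1_eq_Suc add_Suc_right add.assoc)
      then have "r < m" by simp
      have "(- (flip_mat m *\<^sub>v z)) $ i = z $ (m + r)"
        using True i r flip_mat_mult_vec_upper[OF z True] carrier_matD[OF flip_mat_carrier[of m]] by simp
      then show ?thesis
        unfolding H_tilde_mult_vec_upper[OF y True] z_def H_tilde_mult_vec_lower[OF x \<open>r < m\<close>] coords
        using r True y_upper[of "i - 1"] y_lower[of "i - 1"] y_upper[of 0] y_lower[of 0] y_upper[of "i + 1"] y_lower[of "i + 1"]
          y_upper[of "m - 1"] y_lower[of "m - 1"] y_upper[of i]
        by (cases i; cases r) (auto simp: algebra_simps)
    next
      case False
      then obtain k where k: "k < m" and ik: "i = m + k" using i by (metis add_diff_inverse_nat add_less_imp_less_left mult_2)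
      obtain r where r: "m = k + 1 + r" using k by (metis add.commute less_imp_Suc_add plus_1_eq_Suc add_Suc_right add.assoc)
      then have "r < m" by simp
      have "(- (flip_mat m *\<^sub>v z)) $ (m + k) = - z $ r"
        using k i r ik flip_mat_mult_vec_lower[OF z k] carrier_matD[OF flip_mat_carrier[of m]] by simp
      then show ?thesis
        unfolding ik H_tilde_mult_vec_lower[OF y k] z_def H_tilde_mult_vec_upper[OF x \<open>r < m\<close>] coords
        using r k y_upper[of "k - 1"] y_lower[of "k - 1"] y_upper[of 0] y_lower[of 0] y_upper[of "k + 1"] y_lower[of "k + 1"]
          y_upper[of "m - 1"] y_lower[of "m - 1"] y_lower[of k]
        by (cases k; cases r) (auto simp: algebra_simps)
    qed
  qed (use flip_mat_carrier[of m] H_tilde_carrier[of c m] in auto)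
  then show ?thesis unfolding y_def z_def .
qed

lemma flip_mat_square: "flip_mat m * flip_mat m = - 1\<^sub>m (2 * m)"
proof (rule mat_eq_by_mult_vec[of _ "2 * m"])
  fix x :: "real vec" assume x: "x \<in> carrier_vec (2 * m)"
  show "(flip_mat m * flip_mat m) *\<^sub>v x = - 1\<^sub>m (2 * m) *\<^sub>v x"
    using flip_mat_mult_vec_twice[OF x] x flip_mat_carrier[of m] by simp
qed (use flip_mat_carrier[of m] in auto)

lemma H_tilde_flip_anticommute: "flip_mat m * H_tilde c m = - (H_tilde c m * flip_mat m)"
proof (rule mat_eq_by_mult_vec[of _ "2 * m"])
  fix x :: "real vec" assume x: "x \<in> carrier_vec (2 * m)"
  show "(flip_mat m * H_tilde c m) *\<^sub>v x = - (H_tilde c m * flip_mat m) *\<^sub>v x"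
    using H_tilde_flip_anticommute_vec[OF x, of c] x flip_mat_carrier[of m] H_tilde_carrier[of c m] by simp
qed (use flip_mat_carrier[of m] H_tilde_carrier[of c m] in auto)

lemma H_tilde_similar_uminus: "similar_mat (H_tilde c m) (- H_tilde c m)"
proof (rule similar_matI)
  let ?J = "flip_mat m" and ?H = "H_tilde c m"
  have J: "?J \<in> carrier_mat (2 * m) (2 * m)" and H: "?H \<in> carrier_mat (2 * m) (2 * m)"
    by (rule flip_mat_carrier H_tilde_carrier)+
  show "{?H, - ?H, ?J, - ?J} \<subseteq> carrier_mat (2 * m) (2 * m)" using J H by auto
  show "?J * - ?J = 1\<^sub>m (2 * m)" using J by (simp add: flip_mat_square)
  show "- ?J * ?J = 1\<^sub>m (2 * m)" using J by (simp add: flip_mat_square)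
  have "?J * - ?H * - ?J = (?J * ?H) * ?J" using J H by simp
  also have "\<dots> = - (?H * (?J * ?J))" using J H by (simp add: H_tilde_flip_anticommute)
  also have "\<dots> = ?H" using H by (simp add: flip_mat_square)
  finally show "?H = ?J * - ?H * - ?J" ..
qed

lemma H_tilde_char_poly_even: "poly (char_poly (H_tilde c m)) (- x) = poly (char_poly (H_tilde c m)) x"
  using poly_char_poly_uminus[OF H_tilde_carrier, of c m x] char_poly_similar[OF H_tilde_similar_uminus, of c m]
  by simp

lemma H_tilde_eigenvalue_order_symmetric:
  "order (- l) (char_poly (H_tilde c m)) = order l (char_poly (H_tilde c m))"
proof (rule order_uminus_eq_of_even)
  show "char_poly (H_tilde c m) \<noteq> 0"
    using degree_monic_char_poly[OF H_tilde_carrier[of c m]] by auto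
qed (rule H_tilde_char_poly_even)

lemma one_minus_cos_le: "1 - cos t \<le> t ^ 2 / (2::real)"
proof -
  have "\<bar>sin (t / 2)\<bar> ^ 2 \<le> \<bar>t / 2\<bar> ^ 2" by (rule power_mono[OF abs_sin_x_le_abs_x]) simp
  then show ?thesis using cos_double_sin[of "t / 2"] by (simp add: power_divide)
qed

lemma sqrt_gap_edge_bound:
  fixes c t :: real
  assumes c: "c \<ge> 0" and t: "t \<ge> 0"
  shows "sqrt (1 + c ^ 2 - 2 * c * cos t) \<le> \<bar>c - 1\<bar> + t * sqrt c"
proof -
  have "1 + c ^ 2 - 2 * c * cos t = (c - 1) ^ 2 + 2 * c * (1 - cos t)"
    by (simp add: power2_eq_square algebra_simps)
  moreover have "2 * c * (1 - cos t) \<le> c * t ^ 2"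
    using mult_left_mono[OF one_minus_cos_le c, of t] by simp
  ultimately have "sqrt (1 + c ^ 2 - 2 * c * cos t) \<le> sqrt ((c - 1) ^ 2 + c * t ^ 2)"
    by (intro real_sqrt_le_mono) linarith
  also have "\<dots> \<le> sqrt ((c - 1) ^ 2) + sqrt (c * t ^ 2)"
    by (rule sqrt_add_le_add_sqrt) (use c in simp_all)
  also have "\<dots> = \<bar>c - 1\<bar> + t * sqrt c" using t by (simp add: real_sqrt_mult)
  finally show ?thesis .
qed

lemma H_tilde_spectrum_approaches_gap_edge:
  assumes c: "c \<ge> 0" and \<epsilon>: "\<epsilon> > 0"
  shows "\<exists>m. \<exists>l \<in> spec (H_tilde c m). \<bar>l\<bar> < 2 * \<bar>c - 1\<bar> + \<epsilon>"
proof (cases "c = 0")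
  case True
  \<comment> \<open>The trigonometric mode vanishes at \<open>c = 0\<close>; instead \<open>(1, 1)\<close> is an eigenvector of \<open>H_tilde 0 1\<close>.\<close>
  have "back_shift (\<lambda>_. 1) (\<lambda>_. 0) 0 = 1" "fwd_shift 1 (\<lambda>_. 1) (\<lambda>_. 0) 0 = 0"
    unfolding back_shift_def fwd_shift_def by simp_all
  then have "eigenvalue (H_tilde 0 1) 2"
    using H_tilde_eigenvalue_of_coupled_system[of 1 1 "\<lambda>_. 1" "\<lambda>_. 0" 0 0] by simp
  then have "2 \<in> spec (H_tilde c 1)" using True unfolding spec_def by simp
  then show ?thesis using True \<epsilon> by force
next
  case False
  then have c_pos: "c > 0" using c by simp
  obtain n :: nat where n: "4 * sqrt c / \<epsilon> < real n" using reals_Archimedean2 by blast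
  define m where "m = Suc n"
  define t where "t = pi / (2 * real m)"
  define l where "l = 2 * sqrt (1 + c ^ 2 - 2 * c * cos t)"
  have "l \<in> spec (H_tilde c m)"
    using H_tilde_eigenvalue_near_gap_edge[OF c_pos, of m] unfolding spec_def l_def t_def m_def by simp
  moreover have "\<bar>l\<bar> < 2 * \<bar>c - 1\<bar> + \<epsilon>"
  proof -
    have "t \<le> 4 / (2 * real m)" unfolding t_def using pi_less_4 by (intro divide_right_mono) simp_all
    then have "t \<le> 2 / real m" by simp
    then have "2 * (t * sqrt c) \<le> 2 * (2 / real m * sqrt c)" using c by (intro mult_left_mono mult_right_mono) simp_all
    also have "\<dots> < \<epsilon>"
    proof -
      have "4 * sqrt c < \<epsilon> * real n" using n \<epsilon> by (simp add: pos_divide_less_eq mult.commute)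
      also have "\<dots> \<le> \<epsilon> * real m" using \<epsilon> unfolding m_def by simp
      finally have "4 * sqrt c < \<epsilon> * real m" .
      then show ?thesis unfolding m_def by (simp add: divide_simps)
    qed
    finally have "2 * (t * sqrt c) < \<epsilon>" .
    moreover have "0 \<le> t" unfolding t_def by simp
    moreover have "0 \<le> l"
    proof -
      have "2 * c * cos t \<le> 2 * c" using c by (simp add: mult_left_le)
      then have "0 \<le> 1 + c ^ 2 - 2 * c * cos t" using zero_le_power2[of "c - 1"] by (simp add: power2_diff)
      then show ?thesis unfolding l_def by simp
    qed
    ultimately show ?thesis
      using sqrt_gap_edge_bound[OF c \<open>0 \<le> t\<close>] unfolding l_def by simp
  qed
  ultimately show ?thesis by blast
qed

theorem theorem6p2:
  fixes c :: real
  assumes "c \<ge> 0"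
  shows "(\<forall>m. \<forall>l::real. order l (char_poly (H_tilde c m)) = order (- l) (char_poly (H_tilde c m)))
       \<and> (\<forall>m. {-2 * \<bar>c - 1\<bar> <..< 2 * \<bar>c - 1\<bar>} \<inter> spec (H_tilde c m) = {})
       \<and> (\<forall>\<epsilon>>0. \<exists>m. {-2 * \<bar>c - 1\<bar> - \<epsilon> <..< 2 * \<bar>c - 1\<bar> + \<epsilon>} \<inter> spec (H_tilde c m) \<noteq> {})"
proof (intro conjI allI impI)
  fix m and l :: real
  show "order l (char_poly (H_tilde c m)) = order (- l) (char_poly (H_tilde c m))"
    by (rule H_tilde_eigenvalue_order_symmetric[symmetric])
next
  fix m
  show "{-2 * \<bar>c - 1\<bar> <..< 2 * \<bar>c - 1\<bar>} \<inter> spec (H_tilde c m) = {}"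
    using H_tilde_spectral_gap[OF assms, of _ m] by fastforce
next
  fix \<epsilon> :: real
  assume "\<epsilon> > 0"
  then obtain m l where "l \<in> spec (H_tilde c m)" "\<bar>l\<bar> < 2 * \<bar>c - 1\<bar> + \<epsilon>"
    using H_tilde_spectrum_approaches_gap_edge[OF assms] by blast
  then have "l \<in> {-2 * \<bar>c - 1\<bar> - \<epsilon> <..< 2 * \<bar>c - 1\<bar> + \<epsilon>} \<inter> spec (H_tilde c m)"
    by auto
  then show "\<exists>m. {-2 * \<bar>c - 1\<bar> - \<epsilon> <..< 2 * \<bar>c - 1\<bar> + \<epsilon>} \<inter> spec (H_tilde c m) \<noteq> {}"
    by blast
qed

end
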